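(* Let $\mathbb{F}$ be a field, $P\in\mathbb{F}[x_1,\ldots,x_n]$ a polynomial, $\mathcal{F}\subseteq\mathbb{F}^n$ a finite set with $\mathcal{F}\ne\mathbb{F}^n$, and $h\in\mathbb{F}^n\setminus\mathcal{F}$. Put $\mathcal{T}:=\mathcal{F}\cup\{h\}$. Suppose $P(h)\ne 0$ and $P(f)=0$ for every $f\in\mathcal{F}$. If $y$ is a monomial with $y\in \mathrm{Sm}(\prec_{deg},\mathcal{T})\setminus\mathrm{Sm}(\prec_{deg},\mathcal{F})$, then $\deg P\ge\deg y$.
   Context: For a finite nonempty $\mathcal{F}\subseteq\mathbb{F}^n$, $I(\mathcal{F}):=\{f\in\mathbb{F}[x_1,\ldots,x_n]: f(v)=0\ \forall v\in\mathcal{F}\}$. For a term order $\prec$, the leading monomial $\mathrm{lm}(f)$ of a nonzero polynomial is its $\prec$-largest monomial with nonzero coefficient; $\mathrm{Sm}(\prec,\mathcal{F})$ is the set of monomials that are not the leading monomial of any nonzero $f\in I(\mathcal{F})$ (standard monomials). The deglex order $\prec_{deg}$: $u\prec_{deg}v$ iff $\deg u<\deg v$, or $\deg u=\deg v$ and $u\prec_{lex}v$, where for $u=x^{i}$, $v=x^{j}$, $u\prec_{lex}v$ iff $i_k<j_k$ at the smallest index $k$ with $i_k\ne j_k$ (so $x_n\prec\cdots\prec x_1$). *)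

theory Defs
  imports Main "HOL-Library.Poly_Mapping"
begin

text \<open>Multivariate polynomials in variables x_1..x_n are represented as
  poly_mappings from monomials (exponent vectors; variable x_(i+1) has index i)
  to coefficients. Points of F^n are lists of length n.\<close>

type_synonym monom = "nat \<Rightarrow>\<^sub>0 nat"

definition monom_in :: "nat \<Rightarrow> monom \<Rightarrow> bool" where
  "monom_in n m \<longleftrightarrow> Poly_Mapping.keys m \<subseteq> {..<n}"

definition poly_in :: "nat \<Rightarrow> (monom \<Rightarrow>\<^sub>0 'a::zero) \<Rightarrow> bool" where
  "poly_in n p \<longleftrightarrow> (\<forall>m\<in>Poly_Mapping.keys p. monom_in n m)"

definition eval_monom :: "'a::comm_ring_1 list \<Rightarrow> monom \<Rightarrow> 'a" where
  "eval_monom v m = (\<Prod>i\<in>Poly_Mapping.keys m. (v ! i) ^ Poly_Mapping.lookup m i)"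

definition eval_poly :: "(monom \<Rightarrow>\<^sub>0 'a::comm_ring_1) \<Rightarrow> 'a list \<Rightarrow> 'a" where
  "eval_poly p v = (\<Sum>m\<in>Poly_Mapping.keys p. Poly_Mapping.lookup p m * eval_monom v m)"

definition mdeg :: "monom \<Rightarrow> nat" where
  "mdeg m = (\<Sum>i\<in>Poly_Mapping.keys m. Poly_Mapping.lookup m i)"

definition total_degree :: "(monom \<Rightarrow>\<^sub>0 'a::zero) \<Rightarrow> nat" where
  "total_degree p = (if p = 0 then 0 else Max (mdeg ` Poly_Mapping.keys p))"

text \<open>lex: u < v iff at the smallest index where they differ, u's exponent is smaller
  (so x_n < ... < x_1).\<close>
definition lex_less :: "monom \<Rightarrow> monom \<Rightarrow> bool" where
  "lex_less u v \<longleftrightarrow> (\<exists>k. (\<forall>j<k. Poly_Mapping.lookup u j = Poly_Mapping.lookup v j) \<and> Poly_Mapping.lookup u k < Poly_Mapping.lookup v k)"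

definition deglex_less :: "monom \<Rightarrow> monom \<Rightarrow> bool" where
  "deglex_less u v \<longleftrightarrow> mdeg u < mdeg v \<or> (mdeg u = mdeg v \<and> lex_less u v)"

definition is_lm :: "(monom \<Rightarrow>\<^sub>0 'a::zero) \<Rightarrow> monom \<Rightarrow> bool" where
  "is_lm p m \<longleftrightarrow> m \<in> Poly_Mapping.keys p \<and> (\<forall>m'\<in>Poly_Mapping.keys p. m' \<noteq> m \<longrightarrow> deglex_less m' m)"

definition vanishing_ideal :: "nat \<Rightarrow> 'a::field list set \<Rightarrow> (monom \<Rightarrow>\<^sub>0 'a) set" where
  "vanishing_ideal n F = {f. poly_in n f \<and> (\<forall>v\<in>F. eval_poly f v = 0)}"

definition Sm_deglex :: "nat \<Rightarrow> 'a::field list set \<Rightarrow> monom set" where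
  "Sm_deglex n F = {m. monom_in n m \<and>
     \<not> (\<exists>f\<in>vanishing_ideal n F. f \<noteq> 0 \<and> is_lm f m)}"

end

theory Submission
  imports Defs
begin

text \<open>Suppose \<open>deg P < deg y\<close>. Since \<open>y\<close> is not standard for \<open>\<F>\<close>, some \<open>f\<close> vanishing
  on \<open>\<F>\<close> has leading monomial \<open>y\<close>. As \<open>P\<close> vanishes on \<open>\<F>\<close> but not at \<open>h\<close>, the polynomial
  \<open>g = f - (f(h)/P(h)) P\<close> vanishes on \<open>\<F> \<union> {h}\<close>, and because every monomial of \<open>P\<close>
  has degree below \<open>deg y\<close> the correction does not disturb the deglex leading monomial:
  \<open>lm g = y\<close>, contradicting that \<open>y\<close> is standard for \<open>\<F> \<union> {h}\<close>.\<close>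

lemma eval_poly_sum_superset:
  assumes "finite S" "Poly_Mapping.keys p \<subseteq> S"
  shows "eval_poly p v = (\<Sum>m\<in>S. Poly_Mapping.lookup p m * eval_monom v m)"
  unfolding eval_poly_def
  by (rule sum.mono_neutral_left) (use assms in \<open>auto simp: in_keys_iff\<close>)

lemma lookup_map_times:
  "Poly_Mapping.lookup (Poly_Mapping.map ((*) c) p) m = (c::'a::semiring_0) * Poly_Mapping.lookup p m"
  by (simp add: map.rep_eq when_def)

lemma keys_map_times:
  "Poly_Mapping.keys (Poly_Mapping.map ((*) (c::'a::semiring_0)) p) \<subseteq> Poly_Mapping.keys p"
  by (auto simp: in_keys_iff lookup_map_times)

lemma eval_poly_diff: "eval_poly (p - q) v = eval_poly p v - eval_poly q v"
proof -
  define S where "S = Poly_Mapping.keys p \<union> Poly_Mapping.keys q"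
  have S: "finite S" "Poly_Mapping.keys p \<subseteq> S" "Poly_Mapping.keys q \<subseteq> S"
    "Poly_Mapping.keys (p - q) \<subseteq> S"
    using keys_diff[of p q] by (auto simp: S_def)
  then show ?thesis
    by (simp add: eval_poly_sum_superset[of S] lookup_minus left_diff_distrib sum_subtractf)
qed

lemma eval_poly_map_times: "eval_poly (Poly_Mapping.map ((*) c) p) v = c * eval_poly p v"
  using eval_poly_sum_superset[OF finite_keys keys_map_times, of c p v]
  by (simp add: eval_poly_def lookup_map_times sum_distrib_left mult.assoc)

lemma mdeg_le_total_degree:
  "m \<in> Poly_Mapping.keys p \<Longrightarrow> mdeg m \<le> total_degree p"
  by (auto simp: total_degree_def intro: Max_ge)

lemma is_lm_diff_lower_degree:
  assumes "is_lm f y" and low: "\<And>m. m \<in> Poly_Mapping.keys q \<Longrightarrow> mdeg m < mdeg y"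
  shows "is_lm (f - q) y"
proof -
  have "y \<notin> Poly_Mapping.keys q" using low by blast
  then have "y \<in> Poly_Mapping.keys (f - q)"
    using \<open>is_lm f y\<close> by (simp add: is_lm_def in_keys_iff lookup_minus)
  moreover have "deglex_less m y" if "m \<in> Poly_Mapping.keys (f - q)" "m \<noteq> y" for m
  proof -
    have "m \<in> Poly_Mapping.keys f \<or> m \<in> Poly_Mapping.keys q"
      using that(1) keys_diff[of f q] by blast
    then show ?thesis
      using \<open>is_lm f y\<close> that(2) low by (auto simp: is_lm_def deglex_less_def)
  qed
  ultimately show ?thesis by (simp add: is_lm_def)
qed

lemma vanishing_ideal_extend_point:
  fixes P f :: "monom \<Rightarrow>\<^sub>0 'a::field"
  assumes "f \<in> vanishing_ideal n F" "poly_in n P"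
    and "\<forall>v\<in>F. eval_poly P v = 0" "eval_poly P h \<noteq> 0"
  shows "f - Poly_Mapping.map ((*) (eval_poly f h / eval_poly P h)) P
           \<in> vanishing_ideal n (F \<union> {h})"
proof -
  let ?g = "f - Poly_Mapping.map ((*) (eval_poly f h / eval_poly P h)) P"
  have "Poly_Mapping.keys ?g \<subseteq> Poly_Mapping.keys f \<union> Poly_Mapping.keys P"
    using keys_diff[of f] keys_map_times[of _ P] by blast
  then have "poly_in n ?g"
    using assms(1,2) by (auto simp: vanishing_ideal_def poly_in_def)
  moreover have "eval_poly ?g v = 0" if "v \<in> F \<union> {h}" for v
    using that assms(1,3,4) by (auto simp: vanishing_ideal_def eval_poly_diff eval_poly_map_times)
  ultimately show ?thesis by (simp add: vanishing_ideal_def)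
qed

theorem theorem3:
  fixes n :: nat and P :: "monom \<Rightarrow>\<^sub>0 'a::field" and F :: "'a list set"
    and h :: "'a list" and y :: monom
  assumes "poly_in n P"
    and "finite F" and "\<forall>v\<in>F. length v = n" and "F \<noteq> {v. length v = n}"
    and "length h = n" and "h \<notin> F"
    and "eval_poly P h \<noteq> 0" and "\<forall>f\<in>F. eval_poly P f = 0"
    and "y \<in> Sm_deglex n (F \<union> {h}) - Sm_deglex n F"
  shows "total_degree P \<ge> mdeg y"
proof (rule ccontr)
  assume "\<not> total_degree P \<ge> mdeg y"
  then have P_low: "mdeg m < mdeg y" if "m \<in> Poly_Mapping.keys P" for m
    using mdeg_le_total_degree[OF that] by simp
  from assms(9) have y_std: "y \<in> Sm_deglex n (F \<union> {h})" and "y \<notin> Sm_deglex n F" by auto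
  moreover from y_std have "monom_in n y" by (simp add: Sm_deglex_def)
  ultimately obtain f where f: "f \<in> vanishing_ideal n F" "is_lm f y"
    by (auto simp: Sm_deglex_def)
  define g where "g = f - Poly_Mapping.map ((*) (eval_poly f h / eval_poly P h)) P"
  have "g \<in> vanishing_ideal n (F \<union> {h})"
    unfolding g_def using vanishing_ideal_extend_point[OF f(1) assms(1,8,7)] .
  moreover have "is_lm g y"
    unfolding g_def
    by (rule is_lm_diff_lower_degree[OF f(2)]) (meson P_low keys_map_times subsetD)
  moreover have "g \<noteq> 0" using \<open>is_lm g y\<close> by (auto simp: is_lm_def)
  ultimately show False using y_std unfolding Sm_deglex_def by blast
qed

end
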